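(* Let $X$ be a commutative free algebra over $\mathbb{K}$ with a set of free generators $A$, and let $S\subset A$. Let $R\subset\langle S\rangle$ be a set of free generators and let $x\in X\setminus\langle S\rangle$. Then $R\cup\{x\}$ is a set of free generators.
   Context: Algebras are associative linear algebras over $\mathbb{K}$ ($\mathbb{R}$ or $\mathbb{C}$). For a subset $S$ of an algebra, $\langle S\rangle$ is the subalgebra generated by $S$; in the commutative case $\langle S\rangle=\{P(x_1,\dots,x_n): n\in\mathbb{N}, P\in\mathbb{P}_n, x_1,\dots,x_n\in S\}$, where $\mathbb{P}_n$ is the set of polynomials in $n$ variables over $\mathbb{K}$ with no constant term. In a commutative algebra, a subset $S$ is a set of free generators (SFG) if for all $n\in\mathbb{N}$, every non-zero $P\in\mathbb{P}_n$ and all pairwise distinct $x_1,\dots,x_n\in S$ we have $P(x_1,\dots,x_n)\neq0$ (equivalently, the monomials $x_1^{k_1}\cdots x_n^{k_n}$ in distinct elements of $S$ with $k_i\ge1$ form a basis of $\langle S\rangle$). $X$ is a commutative free algebra with SFG $A$ if $A$ is an SFG and $X=\langle A\rangle$. *)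

theory Defs
  imports Complex_Main "HOL-Library.Multiset"
begin

text \<open>A commutative (not necessarily unital) algebra over a field 'k: the carrier is
  the whole type 'a (a commutative ring), with scalar multiplication sc making it a
  'k-module such that multiplication is bilinear.\<close>
definition comm_algebra :: "('k::field \<Rightarrow> 'a::comm_ring \<Rightarrow> 'a) \<Rightarrow> bool" where
  "comm_algebra sc \<longleftrightarrow> module sc \<and> (\<forall>c u v. sc c (u * v) = sc c u * v)"

fun nprod :: "'a::times list \<Rightarrow> 'a" where
  "nprod [] = undefined"
| "nprod [a] = a"
| "nprod (a # b # xs) = a * nprod (b # xs)"

text \<open>A monomial in the variables indexed by nat is a multiset of indices (the
  exponent of variable i is its multiplicity); its value at x.\<close>
definition monom :: "(nat \<Rightarrow> 'a::comm_ring) \<Rightarrow> nat multiset \<Rightarrow> 'a" where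
  "monom x M = nprod (map x (sorted_list_of_multiset M))"

definition nc_poly :: "nat \<Rightarrow> (nat multiset \<Rightarrow> 'k::zero) \<Rightarrow> bool" where
  "nc_poly n P \<longleftrightarrow> finite {M. P M \<noteq> 0} \<and>
     (\<forall>M. P M \<noteq> 0 \<longrightarrow> M \<noteq> {#} \<and> set_mset M \<subseteq> {..<n})"

definition peval :: "('k::field \<Rightarrow> 'a::comm_ring \<Rightarrow> 'a) \<Rightarrow> (nat multiset \<Rightarrow> 'k)
    \<Rightarrow> (nat \<Rightarrow> 'a) \<Rightarrow> 'a" where
  "peval sc P x = (\<Sum>M\<in>{M. P M \<noteq> 0}. sc (P M) (monom x M))"

definition gen :: "('k::field \<Rightarrow> 'a::comm_ring \<Rightarrow> 'a) \<Rightarrow> 'a set \<Rightarrow> 'a set" where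
  "gen sc S = {peval sc P x | n P x. nc_poly n P \<and> x ` {..<n} \<subseteq> S}"

definition SFG :: "('k::field \<Rightarrow> 'a::comm_ring \<Rightarrow> 'a) \<Rightarrow> 'a set \<Rightarrow> bool" where
  "SFG sc S \<longleftrightarrow> (\<forall>n P x. nc_poly n P \<and> (\<exists>M. P M \<noteq> 0) \<and> inj_on x {..<n}
       \<and> x ` {..<n} \<subseteq> S \<longrightarrow> peval sc P x \<noteq> 0)"

end

(* Identify X with the polynomials without constant term in the free generators A. Every element
   of R is then a polynomial in the generators from S, whereas x, not lying in <S>, involves some
   generator outside S. Substituting t a for each generator a outside S, with t a new indeterminate,
   makes the elements of R constants in t and gives x positive t-degree. Writing a relation as
   P(r, x) = P_0(r) + x P_1(r, x) and comparing t-degrees forces P_1(r, x) = 0, so induction on the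
   degree of P in its last variable reduces everything to the algebraic independence of R. That
   independence persists when constant terms are admitted, because the r_i have none. *)

theory Submission
  imports Defs "HOL-Library.Poly_Mapping" "HOL-Library.Multiset_Order"
    "HOL-Computational_Algebra.Polynomial"
begin

section \<open>Monomials in a non-unital commutative algebra\<close>

lemma nprod_Cons: "xs \<noteq> [] \<Longrightarrow> nprod (a # xs) = a * nprod xs"
  by (cases xs) auto

lemma nprod_append:
  fixes xs ys :: "'a::semigroup_mult list"
  assumes "xs \<noteq> []" "ys \<noteq> []"
  shows "nprod (xs @ ys) = nprod xs * nprod ys"
  using assms(1)
proof (induction xs)
  case (Cons a xs)
  then show ?case
    using assms(2) by (cases "xs = []") (simp_all add: nprod_Cons mult.assoc)
qed simp

lemma nprod_middle:
  fixes xs ys :: "'a::ab_semigroup_mult list"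
  assumes "xs @ ys \<noteq> []"
  shows "nprod (xs @ a # ys) = a * nprod (xs @ ys)"
proof (cases "xs = [] \<or> ys = []")
  case True
  then show ?thesis
    using assms by (auto simp: nprod_Cons nprod_append mult.commute)
next
  case False
  then show ?thesis
    by (simp add: nprod_append nprod_Cons mult.left_commute)
qed

lemma nprod_mset_eq:
  fixes xs ys :: "'a::ab_semigroup_mult list"
  shows "mset xs = mset ys \<Longrightarrow> nprod xs = nprod ys"
proof (induction xs arbitrary: ys)
  case (Cons a xs)
  then obtain ys1 ys2 where ys: "ys = ys1 @ a # ys2"
    by (metis list.set_intros(1) set_mset_mset split_list)
  with Cons.prems have mset_eq: "mset xs = mset (ys1 @ ys2)"
    by simp
  show ?case
  proof (cases "xs = []")
    case True
    with mset_eq ys show ?thesis by simp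
  next
    case False
    with mset_eq have "ys1 @ ys2 \<noteq> []" by auto
    with False ys Cons.IH[OF mset_eq] show ?thesis
      by (simp add: nprod_Cons nprod_middle)
  qed
qed simp

lemma monom_eq_nprod: "mset xs = M \<Longrightarrow> Defs.monom w M = nprod (map w xs)"
  unfolding Defs.monom_def by (rule nprod_mset_eq) simp

lemma monom_add:
  assumes "M \<noteq> {#}" "N \<noteq> {#}"
  shows "Defs.monom w (M + N) = Defs.monom w M * Defs.monom w N"
proof -
  obtain xs ys where "mset xs = M" "mset ys = N"
    by (metis ex_mset)
  with assms show ?thesis
    by (auto simp: monom_eq_nprod[of "xs @ ys"] monom_eq_nprod[of xs] monom_eq_nprod[of ys]
        nprod_append)
qed

lemma monom_single [simp]: "Defs.monom w {#k#} = w k"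
  by (simp add: monom_eq_nprod[of "[k]"])

lemma monom_cong: "(\<And>k. k \<in># M \<Longrightarrow> w k = w' k) \<Longrightarrow> Defs.monom w M = Defs.monom w' M"
  unfolding Defs.monom_def by (metis map_eq_conv set_sorted_list_of_multiset)

section \<open>Polynomials in countably many variables\<close>

type_synonym 'k mpoly = "nat multiset \<Rightarrow>\<^sub>0 'k"

definition vars :: "'k::zero mpoly \<Rightarrow> nat set" where
  "vars P = (\<Union>M\<in>Poly_Mapping.keys P. set_mset M)"

definition sum_keys :: "('m \<Rightarrow> 'c::zero \<Rightarrow> 'b::comm_monoid_add) \<Rightarrow> ('m \<Rightarrow>\<^sub>0 'c) \<Rightarrow> 'b" where
  "sum_keys f P = (\<Sum>M\<in>Poly_Mapping.keys P. f M (Poly_Mapping.lookup P M))"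

lemma sum_keys_zero [simp]: "sum_keys f 0 = 0"
  by (simp add: sum_keys_def)

lemma sum_keys_single: "f M 0 = 0 \<Longrightarrow> sum_keys f (Poly_Mapping.single M c) = f M c"
  by (cases "c = 0") (auto simp: sum_keys_def)

context
  fixes f :: "'m \<Rightarrow> 'c::comm_monoid_add \<Rightarrow> 'b::comm_monoid_add"
  assumes f_zero: "\<And>M. f M 0 = 0" and f_add: "\<And>M a b. f M (a + b) = f M a + f M b"
begin

lemma sum_keys_add: "sum_keys f (P + Q) = sum_keys f P + sum_keys f Q"
  unfolding sum_keys_def by (rule setsum_keys_plus_distrib) (simp_all add: f_zero f_add)

lemma sum_keys_sum: "sum_keys f (sum g I) = (\<Sum>i\<in>I. sum_keys f (g i))"
  by (induction I rule: infinite_finite_induct) (simp_all add: sum_keys_add)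

end

lemma poly_mapping_sum_single:
  "P = (\<Sum>M\<in>Poly_Mapping.keys P. Poly_Mapping.single M (Poly_Mapping.lookup P M))"
proof (rule poly_mapping_eqI)
  fix k
  show "Poly_Mapping.lookup P k =
      Poly_Mapping.lookup (\<Sum>M\<in>Poly_Mapping.keys P. Poly_Mapping.single M (Poly_Mapping.lookup P M)) k"
    by (cases "k \<in> Poly_Mapping.keys P") (auto simp: lookup_sum lookup_single when_def in_keys_iff)
qed

lemma sum_keys_mult:
  fixes P Q :: "'m::comm_monoid_add \<Rightarrow>\<^sub>0 'c::comm_semiring_0"
  assumes "\<And>M. f M 0 = 0" "\<And>M a b. f M (a + b) = f M a + f M b"
  shows "sum_keys f (P * Q) = (\<Sum>M\<in>Poly_Mapping.keys P. \<Sum>N\<in>Poly_Mapping.keys Q.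
           f (M + N) (Poly_Mapping.lookup P M * Poly_Mapping.lookup Q N))"
proof -
  have "P * Q = (\<Sum>M\<in>Poly_Mapping.keys P. Poly_Mapping.single M (Poly_Mapping.lookup P M)) *
      (\<Sum>N\<in>Poly_Mapping.keys Q. Poly_Mapping.single N (Poly_Mapping.lookup Q N))"
    by (simp flip: poly_mapping_sum_single)
  also have "\<dots> = (\<Sum>M\<in>Poly_Mapping.keys P. \<Sum>N\<in>Poly_Mapping.keys Q.
      Poly_Mapping.single (M + N) (Poly_Mapping.lookup P M * Poly_Mapping.lookup Q N))"
    by (simp add: sum_product mult_single)
  finally show ?thesis
    by (simp add: sum_keys_sum[OF assms] sum_keys_single assms)
qed

definition Var :: "nat \<Rightarrow> 'k::comm_semiring_1 mpoly" where
  "Var i = Poly_Mapping.single {#i#} 1"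

definition hom_eval :: "('k::zero \<Rightarrow> 'd::comm_semiring_1) \<Rightarrow> (nat \<Rightarrow> 'd) \<Rightarrow> 'k mpoly \<Rightarrow> 'd" where
  "hom_eval e v P = sum_keys (\<lambda>M c. e c * prod_mset (image_mset v M)) P"

lemma hom_eval_cong:
  assumes "\<And>k. k \<in> vars P \<Longrightarrow> v k = v' k"
  shows "hom_eval e v P = hom_eval e v' P"
  unfolding hom_eval_def sum_keys_def using assms unfolding vars_def
  by (intro sum.cong refl arg_cong2[where f = "(*)"] arg_cong[where f = prod_mset] image_mset_cong) auto

lemma hom_eval_zero [simp]: "hom_eval e v 0 = 0"
  by (simp add: hom_eval_def)

locale comm_semiring_hom =
  fixes h :: "'a::comm_semiring_1 \<Rightarrow> 'b::comm_semiring_1"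
  assumes hom_0: "h 0 = 0" and hom_1: "h 1 = 1"
    and hom_add: "h (a + b) = h a + h b" and hom_mult: "h (a * b) = h a * h b"
begin

lemma hom_sum: "h (sum f I) = (\<Sum>i\<in>I. h (f i))"
  by (induction I rule: infinite_finite_induct) (simp_all add: hom_0 hom_add)

lemma hom_prod_mset: "h (prod_mset (image_mset f M)) = prod_mset (image_mset (h \<circ> f) M)"
  by (induction M) (simp_all add: hom_1 hom_mult)

lemma hom_hom_eval: "h (hom_eval e v P) = hom_eval (h \<circ> e) (h \<circ> v) P"
  by (simp add: hom_eval_def sum_keys_def hom_sum hom_mult hom_prod_mset)

lemma hom_eval_add: "hom_eval h v (P + Q) = hom_eval h v P + hom_eval h v Q"
  unfolding hom_eval_def by (rule sum_keys_add) (simp_all add: hom_0 hom_add distrib_right)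

lemma hom_eval_single: "hom_eval h v (Poly_Mapping.single M c) = h c * prod_mset (image_mset v M)"
  unfolding hom_eval_def by (rule sum_keys_single) (simp add: hom_0)

lemma hom_eval_sum: "hom_eval h v (sum g I) = (\<Sum>i\<in>I. hom_eval h v (g i))"
  unfolding hom_eval_def by (rule sum_keys_sum) (simp_all add: hom_0 hom_add distrib_right)

lemma hom_eval_mult: "hom_eval h v (P * Q) = hom_eval h v P * hom_eval h v Q"
proof -
  have "hom_eval h v (P * Q) = (\<Sum>M\<in>Poly_Mapping.keys P. \<Sum>N\<in>Poly_Mapping.keys Q.
      h (Poly_Mapping.lookup P M * Poly_Mapping.lookup Q N) * prod_mset (image_mset v (M + N)))"
    unfolding hom_eval_def by (rule sum_keys_mult) (simp_all add: hom_0 hom_add distrib_right)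
  also have "\<dots> = hom_eval h v P * hom_eval h v Q"
    by (simp add: hom_eval_def sum_keys_def sum_product hom_mult mult_ac)
  finally show ?thesis .
qed

lemma hom_eval_Var: "hom_eval h v (Var i) = v i"
  by (simp add: Var_def hom_eval_single hom_1)

lemma hom_eval_one: "hom_eval h v 1 = 1"
  by (simp flip: single_one add: hom_eval_single hom_1)

lemma comm_semiring_hom_hom_eval: "comm_semiring_hom (hom_eval h v)"
  by unfold_locales (simp_all add: hom_eval_add hom_eval_mult hom_eval_one)

end

interpretation const_mpoly: comm_semiring_hom "Poly_Mapping.single {#}"
  by unfold_locales (simp_all add: single_add mult_single)

interpretation const_poly: comm_semiring_hom "\<lambda>c. [:c:]"
  by unfold_locales (simp_all add: one_pCons mult_to_poly mult.commute)

abbreviation psubst :: "'k::comm_semiring_1 mpoly \<Rightarrow> (nat \<Rightarrow> 'k mpoly) \<Rightarrow> 'k mpoly" where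
  "psubst P Q \<equiv> hom_eval (Poly_Mapping.single {#}) Q P"

lemma psubst_eq_sum:
  "psubst P Q = (\<Sum>M\<in>Poly_Mapping.keys P.
     Poly_Mapping.single {#} (Poly_Mapping.lookup P M) * prod_mset (image_mset Q M))"
  by (subst poly_mapping_sum_single[of P])
    (simp add: const_mpoly.hom_eval_sum const_mpoly.hom_eval_single)

lemma prod_mset_Var: "prod_mset (image_mset Var M) = Poly_Mapping.single M 1"
  by (induction M) (simp_all add: Var_def mult_single)

lemma psubst_Var: "psubst P Var = P"
proof -
  have "psubst P Var = (\<Sum>M\<in>Poly_Mapping.keys P. Poly_Mapping.single {#} (Poly_Mapping.lookup P M) *
      Poly_Mapping.single M 1)"
    by (simp add: psubst_eq_sum prod_mset_Var)
  also have "\<dots> = P"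
    by (simp add: mult_single flip: poly_mapping_sum_single)
  finally show ?thesis .
qed

lemma psubst_of_Var: "psubst (Var i) Q = Q i"
  by (simp add: Var_def const_mpoly.hom_eval_single)

lemma psubst_psubst: "psubst (psubst P Q) Q' = psubst P (\<lambda>k. psubst (Q k) Q')"
proof -
  interpret comm_semiring_hom "\<lambda>W. psubst W Q'"
    by (rule const_mpoly.comm_semiring_hom_hom_eval)
  show ?thesis
    by (simp add: hom_hom_eval o_def const_mpoly.hom_eval_single)
qed

definition nc_in :: "nat set \<Rightarrow> 'k::zero mpoly \<Rightarrow> bool" where
  "nc_in V P \<longleftrightarrow> {#} \<notin> Poly_Mapping.keys P \<and> vars P \<subseteq> V"

lemma vars_mult: "vars (P * Q) \<subseteq> vars P \<union> vars Q"
  using keys_mult[of P Q] by (fastforce simp: vars_def)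

lemma nc_in_Var [simp]: "nc_in V (Var k) \<longleftrightarrow> k \<in> V"
  by (simp add: nc_in_def vars_def Var_def)

lemma nc_in_mono: "nc_in V P \<Longrightarrow> V \<subseteq> V' \<Longrightarrow> nc_in V' P"
  by (auto simp: nc_in_def)

lemma nc_in_add: "nc_in V P \<Longrightarrow> nc_in V Q \<Longrightarrow> nc_in V (P + Q)"
  using keys_add[of P Q] unfolding nc_in_def vars_def by blast

lemma nc_in_sum: "(\<And>i. i \<in> I \<Longrightarrow> nc_in V (f i)) \<Longrightarrow> nc_in V (sum f I)"
proof (induction I rule: infinite_finite_induct)
  case (insert i I)
  then show ?case by (simp add: nc_in_add)
qed (simp_all add: nc_in_def vars_def)

lemma nc_in_mult:
  fixes P Q :: "'k::comm_semiring_0 mpoly"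
  assumes "nc_in V P" "vars Q \<subseteq> V"
  shows "nc_in V (P * Q)"
proof -
  have "{#} \<notin> Poly_Mapping.keys (P * Q)"
    using keys_mult[of P Q] assms(1) by (auto simp: nc_in_def)
  then show ?thesis
    using vars_mult[of P Q] assms by (auto simp: nc_in_def)
qed

lemma nc_in_prod_mset:
  fixes Q :: "nat \<Rightarrow> 'k::comm_semiring_1 mpoly"
  assumes "M \<noteq> {#}" "\<And>k. k \<in># M \<Longrightarrow> nc_in V (Q k)"
  shows "nc_in V (prod_mset (image_mset Q M))"
  using assms
proof (induction M)
  case (add k M)
  show ?case
  proof (cases "M = {#}")
    case False
    with add have "vars (prod_mset (image_mset Q M)) \<subseteq> V"
      by (simp add: nc_in_def)
    with add.prems show ?thesis
      by (simp add: nc_in_mult)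
  qed (use add.prems in simp)
qed simp

lemma psubst_nc_in:
  fixes Q :: "nat \<Rightarrow> 'k::comm_semiring_1 mpoly"
  assumes "{#} \<notin> Poly_Mapping.keys P" "\<And>k. k \<in> vars P \<Longrightarrow> nc_in V (Q k)"
  shows "nc_in V (psubst P Q)"
  unfolding psubst_eq_sum
proof (intro nc_in_sum)
  fix M assume M: "M \<in> Poly_Mapping.keys P"
  have "nc_in V (prod_mset (image_mset Q M))"
    using M assms by (intro nc_in_prod_mset) (auto simp: vars_def)
  then show "nc_in V (Poly_Mapping.single {#} (Poly_Mapping.lookup P M) * prod_mset (image_mset Q M))"
    by (subst mult.commute) (rule nc_in_mult, auto simp: vars_def)
qed

lemma lookup_psubst_empty:
  fixes Q :: "nat \<Rightarrow> 'k::comm_ring_1 mpoly"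
  assumes "\<And>k. k \<in> vars P \<Longrightarrow> nc_in UNIV (Q k)"
  shows "Poly_Mapping.lookup (psubst P Q) {#} = Poly_Mapping.lookup P {#}"
proof -
  define c where "c = Poly_Mapping.lookup P {#}"
  define P' where "P' = P - Poly_Mapping.single {#} c"
  have "Poly_Mapping.lookup P' M = (if M = {#} then 0 else Poly_Mapping.lookup P M)" for M
    by (simp add: P'_def c_def lookup_minus lookup_single when_def)
  then have "Poly_Mapping.keys P' \<subseteq> Poly_Mapping.keys P - {{#}}"
    by (auto simp: in_keys_iff split: if_splits)
  then have "{#} \<notin> Poly_Mapping.keys P'" "vars P' \<subseteq> vars P"
    by (auto simp: vars_def)
  with assms have "nc_in UNIV (psubst P' Q)"
    by (intro psubst_nc_in) auto
  moreover have "psubst P Q = psubst (P' + Poly_Mapping.single {#} c) Q"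
    by (simp add: P'_def)
  then have "psubst P Q = psubst P' Q + Poly_Mapping.single {#} c"
    by (simp add: const_mpoly.hom_eval_add const_mpoly.hom_eval_single)
  ultimately show ?thesis
    by (simp add: lookup_add c_def nc_in_def in_keys_iff)
qed

section \<open>Evaluation in the algebra\<close>

definition aeval :: "('k::field \<Rightarrow> 'a::comm_ring \<Rightarrow> 'a) \<Rightarrow> (nat \<Rightarrow> 'a) \<Rightarrow> 'k mpoly \<Rightarrow> 'a" where
  "aeval sc w P = peval sc (Poly_Mapping.lookup P) w"

lemma aeval_zero [simp]: "aeval sc w 0 = 0"
  by (simp add: aeval_def peval_def)

lemma aeval_eq_sum_keys: "aeval sc w P = sum_keys (\<lambda>M c. sc c (Defs.monom w M)) P"
  by (simp add: aeval_def peval_def sum_keys_def flip: in_keys_iff)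

context
  fixes sc :: "'k::field \<Rightarrow> 'a::comm_ring \<Rightarrow> 'a"
  assumes comm_algebra: "comm_algebra sc"
begin

interpretation module sc
  using comm_algebra by (simp add: comm_algebra_def)

lemma scale_mult_scale: "sc a u * sc b v = sc (a * b) (u * v)"
proof -
  have scale_mult: "sc c (u * v) = sc c u * v" for c u v
    using comm_algebra by (simp add: comm_algebra_def)
  have "sc a u * sc b v = sc a (sc b (v * u))"
    by (metis scale_mult mult.commute)
  then show ?thesis
    by (simp add: mult.commute)
qed

lemma aeval_sum: "aeval sc w (sum f I) = (\<Sum>i\<in>I. aeval sc w (f i))"
  unfolding aeval_eq_sum_keys by (rule sum_keys_sum) (simp_all add: scale_left_distrib)

lemma aeval_Var: "aeval sc w (Var k) = w k"
  by (simp add: aeval_eq_sum_keys Var_def sum_keys_single)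

lemma aeval_const_mult: "aeval sc w (Poly_Mapping.single {#} c * P) = sc c (aeval sc w P)"
proof (cases "c = 0")
  case False
  have "Poly_Mapping.single {#} c * P = Poly_Mapping.map ((*) c) P"
    by (simp flip: mult_map_scale_conv_mult)
  then show ?thesis
    using False by (simp add: aeval_def peval_def map.rep_eq when_def scale_sum_right)
qed simp

lemma aeval_mult:
  assumes "nc_in UNIV P" "nc_in UNIV Q"
  shows "aeval sc w (P * Q) = aeval sc w P * aeval sc w Q"
proof -
  have "aeval sc w (P * Q) = (\<Sum>M\<in>Poly_Mapping.keys P. \<Sum>N\<in>Poly_Mapping.keys Q.
      sc (Poly_Mapping.lookup P M * Poly_Mapping.lookup Q N) (Defs.monom w (M + N)))"
    unfolding aeval_eq_sum_keys by (rule sum_keys_mult) (simp_all add: scale_left_distrib)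
  also have "\<dots> = (\<Sum>M\<in>Poly_Mapping.keys P. \<Sum>N\<in>Poly_Mapping.keys Q.
      sc (Poly_Mapping.lookup P M) (Defs.monom w M) * sc (Poly_Mapping.lookup Q N) (Defs.monom w N))"
  proof (intro sum.cong refl)
    fix M N
    assume "M \<in> Poly_Mapping.keys P" "N \<in> Poly_Mapping.keys Q"
    with assms have "M \<noteq> {#}" "N \<noteq> {#}"
      by (auto simp: nc_in_def)
    then show "sc (Poly_Mapping.lookup P M * Poly_Mapping.lookup Q N) (Defs.monom w (M + N)) =
        sc (Poly_Mapping.lookup P M) (Defs.monom w M) * sc (Poly_Mapping.lookup Q N) (Defs.monom w N)"
      by (simp add: monom_add scale_mult_scale)
  qed
  also have "\<dots> = aeval sc w P * aeval sc w Q"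
    by (simp add: aeval_eq_sum_keys sum_keys_def sum_product)
  finally show ?thesis .
qed

lemma aeval_prod_mset:
  assumes "M \<noteq> {#}" "\<And>k. k \<in># M \<Longrightarrow> nc_in UNIV (Q k)"
  shows "aeval sc w (prod_mset (image_mset Q M)) = Defs.monom (\<lambda>k. aeval sc w (Q k)) M"
  using assms
proof (induction M)
  case (add k M)
  show ?case
  proof (cases "M = {#}")
    case False
    with add.prems have "nc_in UNIV (prod_mset (image_mset Q M))"
      by (intro nc_in_prod_mset) auto
    with False add show ?thesis
      by (simp add: aeval_mult monom_add[of "{#k#}" M, simplified])
  qed simp
qed simp

lemma aeval_psubst:
  assumes "nc_in V P" "\<And>i. i \<in> V \<Longrightarrow> nc_in UNIV (Q i)"
  shows "aeval sc w (psubst P Q) = aeval sc (\<lambda>i. aeval sc w (Q i)) P"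
proof -
  have "aeval sc w (psubst P Q) = (\<Sum>M\<in>Poly_Mapping.keys P.
      sc (Poly_Mapping.lookup P M) (aeval sc w (prod_mset (image_mset Q M))))"
    by (simp add: psubst_eq_sum aeval_sum aeval_const_mult)
  also have "\<dots> = (\<Sum>M\<in>Poly_Mapping.keys P.
      sc (Poly_Mapping.lookup P M) (Defs.monom (\<lambda>i. aeval sc w (Q i)) M))"
    using assms by (intro sum.cong refl arg_cong[where f = "sc _"] aeval_prod_mset)
      (auto simp: nc_in_def vars_def)
  also have "\<dots> = aeval sc (\<lambda>i. aeval sc w (Q i)) P"
    by (simp add: aeval_eq_sum_keys sum_keys_def)
  finally show ?thesis .
qed

end

lemma aeval_cong: "(\<And>k. k \<in> vars P \<Longrightarrow> w k = w' k) \<Longrightarrow> aeval sc w P = aeval sc w' P"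
  unfolding aeval_eq_sum_keys sum_keys_def vars_def
  by (intro sum.cong refl arg_cong[where f = "sc _"] monom_cong) auto

section \<open>Algebraic independence\<close>

lemma comm_semiring_hom_const_poly: "comm_semiring_hom e \<Longrightarrow> comm_semiring_hom (\<lambda>c. [:e c:])"
  unfolding comm_semiring_hom_def by (simp add: one_pCons mult_to_poly mult.commute)

lemma split_off_Var:
  fixes P :: "'k::comm_semiring_1 mpoly"
  obtains P0 P1 where "P = P0 + Var j * P1" "vars P0 \<subseteq> vars P - {j}" "vars P1 \<subseteq> vars P"
    "\<And>d. \<forall>M\<in>Poly_Mapping.keys P. count M j \<le> Suc d \<Longrightarrow> \<forall>M\<in>Poly_Mapping.keys P1. count M j \<le> d"
proof
  let ?K0 = "{M\<in>Poly_Mapping.keys P. j \<notin># M}" and ?K1 = "{M\<in>Poly_Mapping.keys P. j \<in># M}"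
  define P0 where "P0 = (\<Sum>M\<in>?K0. Poly_Mapping.single M (Poly_Mapping.lookup P M))"
  define P1 where "P1 = (\<Sum>M\<in>?K1. Poly_Mapping.single (M - {#j#}) (Poly_Mapping.lookup P M))"
  have "P = P0 + (\<Sum>M\<in>?K1. Poly_Mapping.single M (Poly_Mapping.lookup P M))"
    unfolding P0_def
    by (subst poly_mapping_sum_single, subst sum.union_disjoint[symmetric]) (auto intro!: sum.cong)
  also have "(\<Sum>M\<in>?K1. Poly_Mapping.single M (Poly_Mapping.lookup P M)) = Var j * P1"
    unfolding P1_def sum_distrib_left
    by (intro sum.cong refl) (simp add: Var_def mult_single)
  finally show "P = P0 + Var j * P1" .
  have keys_P0: "Poly_Mapping.keys P0 \<subseteq> ?K0"
    unfolding P0_def using keys_sum by (fastforce split: if_splits)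
  then show "vars P0 \<subseteq> vars P - {j}"
    by (auto simp: vars_def)
  have keys_P1: "Poly_Mapping.keys P1 \<subseteq> (\<lambda>M. M - {#j#}) ` ?K1"
    unfolding P1_def using keys_sum by (fastforce split: if_splits)
  then show "vars P1 \<subseteq> vars P"
    by (fastforce simp: vars_def dest: in_diffD)
  show "\<forall>M\<in>Poly_Mapping.keys P1. count M j \<le> d"
    if "\<forall>M\<in>Poly_Mapping.keys P. count M j \<le> Suc d" for d
    using keys_P1 that by fastforce
qed

lemma hom_eval_const_poly:
  assumes "\<And>i. i \<in> vars G \<Longrightarrow> v i = [:w i:]"
  shows "hom_eval (\<lambda>c. [:e c:]) v G = [:hom_eval e w G:]"
proof -
  have "hom_eval (\<lambda>c. [:e c:]) v G = hom_eval (\<lambda>c. [:e c:]) (\<lambda>i. [:w i:]) G"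
    using assms by (rule hom_eval_cong)
  also have "\<dots> = [:hom_eval e w G:]"
    by (simp add: const_poly.hom_hom_eval o_def)
  finally show ?thesis .
qed

lemma hom_eval_const_poly_ne_zero_of_count_le:
  fixes e :: "'k::comm_semiring_1 \<Rightarrow> 'd::idom" and v :: "nat \<Rightarrow> 'd poly"
  assumes hom: "comm_semiring_hom e"
    and indep: "\<And>G. G \<noteq> 0 \<Longrightarrow> vars G \<subseteq> V \<Longrightarrow> hom_eval e w G \<noteq> 0"
    and const: "\<And>i. i \<in> V \<Longrightarrow> v i = [:w i:]" and deg: "degree (v j) \<noteq> 0"
  shows "P \<noteq> 0 \<Longrightarrow> vars P \<subseteq> insert j V \<Longrightarrow> \<forall>M\<in>Poly_Mapping.keys P. count M j \<le> d \<Longrightarrow>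
    hom_eval (\<lambda>c. [:e c:]) v P \<noteq> 0"
proof (induction d arbitrary: P)
  case 0
  then have "vars P \<subseteq> V"
    by (fastforce simp: vars_def count_eq_zero_iff)
  moreover from this have "hom_eval (\<lambda>c. [:e c:]) v P = [:hom_eval e w P:]"
    using const by (intro hom_eval_const_poly) auto
  ultimately show ?case
    using indep "0.prems"(1) by simp
next
  case (Suc d)
  interpret E: comm_semiring_hom "\<lambda>c. [:e c:]"
    using hom by (rule comm_semiring_hom_const_poly)
  obtain P0 P1 where split: "P = P0 + Var j * P1" "vars P0 \<subseteq> vars P - {j}" "vars P1 \<subseteq> vars P"
    "\<forall>M\<in>Poly_Mapping.keys P1. count M j \<le> d"
    using split_off_Var[of P j] Suc.prems(3) by metis
  have P0: "vars P0 \<subseteq> V"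
    using split(2) Suc.prems(2) by blast
  then have eval_P0: "hom_eval (\<lambda>c. [:e c:]) v P0 = [:hom_eval e w P0:]"
    using const by (intro hom_eval_const_poly) auto
  then have eval_P: "hom_eval (\<lambda>c. [:e c:]) v P =
      [:hom_eval e w P0:] + v j * hom_eval (\<lambda>c. [:e c:]) v P1"
    by (subst split(1)) (simp add: E.hom_eval_add E.hom_eval_mult E.hom_eval_Var)
  show ?case
  proof (cases "P1 = 0")
    case True
    with split(1) Suc.prems(1) P0 indep show ?thesis
      by (simp add: eval_P0)
  next
    case False
    with split Suc.IH Suc.prems have "hom_eval (\<lambda>c. [:e c:]) v P1 \<noteq> 0"
      by blast
    with deg have "degree (v j * hom_eval (\<lambda>c. [:e c:]) v P1) \<noteq> 0"
      by (subst degree_mult_eq) auto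
    then show ?thesis
      unfolding eval_P by (metis add_eq_0_iff degree_minus degree_pCons_0)
  qed
qed

lemma hom_eval_const_poly_ne_zero:
  fixes e :: "'k::comm_semiring_1 \<Rightarrow> 'd::idom" and v :: "nat \<Rightarrow> 'd poly"
  assumes "comm_semiring_hom e"
    and "\<And>G. G \<noteq> 0 \<Longrightarrow> vars G \<subseteq> V \<Longrightarrow> hom_eval e w G \<noteq> 0"
    and "\<And>i. i \<in> V \<Longrightarrow> v i = [:w i:]" "degree (v j) \<noteq> 0"
    and "P \<noteq> 0" "vars P \<subseteq> insert j V"
  shows "hom_eval (\<lambda>c. [:e c:]) v P \<noteq> 0"
proof -
  have "\<forall>M\<in>Poly_Mapping.keys P. count M j \<le> (\<Sum>M\<in>Poly_Mapping.keys P. count M j)"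
    by (intro ballI member_le_sum) auto
  with assms show ?thesis
    by (intro hom_eval_const_poly_ne_zero_of_count_le) auto
qed

(* The substitution x_k := t x_k for k outside I; the t-degree counts the variables outside I. *)
definition t_scale :: "nat set \<Rightarrow> nat \<Rightarrow> 'k::comm_semiring_1 mpoly poly" where
  "t_scale I k = (if k \<in> I then [:Var k:] else Polynomial.monom (Var k) 1)"

definition t_grade :: "nat set \<Rightarrow> 'k::comm_semiring_1 mpoly \<Rightarrow> 'k mpoly poly" where
  "t_grade I = hom_eval (\<lambda>c. [:Poly_Mapping.single {#} c:]) (t_scale I)"

interpretation const_mpoly_poly: comm_semiring_hom "\<lambda>c. [:Poly_Mapping.single {#} c:]"
  by (rule comm_semiring_hom_const_poly) (rule const_mpoly.comm_semiring_hom_axioms)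

lemma comm_semiring_hom_t_grade: "comm_semiring_hom (t_grade I)"
  unfolding t_grade_def by (rule const_mpoly_poly.comm_semiring_hom_hom_eval)

lemma t_grade_const: "vars W \<subseteq> I \<Longrightarrow> t_grade I W = [:W:]"
  unfolding t_grade_def
  by (subst hom_eval_const_poly[where w = Var]) (auto simp: t_scale_def psubst_Var)

lemma t_grade_single:
  "t_grade I (Poly_Mapping.single M c) =
     Polynomial.monom (Poly_Mapping.single M c) (size (filter_mset (\<lambda>k. k \<notin> I) M))"
proof -
  have t_scale_prod: "prod_mset (image_mset (t_scale I) M) =
      Polynomial.monom (Poly_Mapping.single M 1) (size (filter_mset (\<lambda>k. k \<notin> I) M))"
  proof (induction M)
    case empty
    then show ?case by (simp add: one_pCons monom_0)
  next
    case (add k M)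
    have "Var k * Poly_Mapping.single M 1 = Poly_Mapping.single (add_mset k M) 1"
      by (simp add: Var_def mult_single)
    with add show ?case
      by (simp add: t_scale_def mult_monom monom_0[symmetric])
  qed
  have "t_grade I (Poly_Mapping.single M c) = Polynomial.monom (Poly_Mapping.single {#} c) 0 *
      Polynomial.monom (Poly_Mapping.single M 1) (size (filter_mset (\<lambda>k. k \<notin> I) M))"
    by (simp add: t_grade_def const_mpoly_poly.hom_eval_single t_scale_prod monom_0)
  then show ?thesis
    by (simp add: mult_monom mult_single)
qed

lemma t_grade_degree:
  assumes "M \<in> Poly_Mapping.keys W" "k \<in># M" "k \<notin> I"
  shows "degree (t_grade I W) \<noteq> 0"
proof -
  interpret T: comm_semiring_hom "t_grade I"
    by (rule comm_semiring_hom_t_grade)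
  define d where "d N = size (filter_mset (\<lambda>k. k \<notin> I) N)" for N :: "nat multiset"
  have "t_grade I W = (\<Sum>N\<in>Poly_Mapping.keys W. t_grade I (Poly_Mapping.single N (Poly_Mapping.lookup W N)))"
    by (subst poly_mapping_sum_single) (rule T.hom_sum)
  also have "\<dots> =
      (\<Sum>N\<in>Poly_Mapping.keys W. Polynomial.monom (Poly_Mapping.single N (Poly_Mapping.lookup W N)) (d N))"
    by (simp add: t_grade_single d_def)
  finally have expansion: "t_grade I W = \<dots>" .
  have "Poly_Mapping.lookup (coeff (t_grade I W) (d M)) M =
      (\<Sum>N\<in>Poly_Mapping.keys W. if N = M then Poly_Mapping.lookup W M else 0)"
    unfolding expansion coeff_sum lookup_sum
    by (intro sum.cong refl) (auto simp: lookup_single when_def)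
  also have "\<dots> = Poly_Mapping.lookup W M"
    using assms(1) by simp
  finally have "coeff (t_grade I W) (d M) \<noteq> 0"
    using assms(1) by (auto simp: in_keys_iff)
  moreover have "d M \<noteq> 0"
    using assms(2,3) by (auto simp: d_def)
  ultimately show ?thesis
    by (metis le_degree le_zero_eq)
qed

(* Unlike in SFG, G may have a constant term; the induction in
   hom_eval_const_poly_ne_zero_of_count_le produces such G. *)
definition alg_indep :: "nat set \<Rightarrow> (nat \<Rightarrow> 'k::comm_semiring_1 mpoly) \<Rightarrow> bool" where
  "alg_indep V Z \<longleftrightarrow> (\<forall>G. G \<noteq> 0 \<longrightarrow> vars G \<subseteq> V \<longrightarrow> psubst G Z \<noteq> 0)"

lemma alg_indep_insert:
  fixes Z :: "nat \<Rightarrow> 'k::idom mpoly"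
  assumes indep: "alg_indep V Z" and vars_Z: "\<And>i. i \<in> V \<Longrightarrow> vars (Z i) \<subseteq> I"
    and "M \<in> Poly_Mapping.keys (Z j)" "k \<in># M" "k \<notin> I"
  shows "alg_indep (insert j V) Z"
  unfolding alg_indep_def
proof (intro allI impI)
  fix G :: "'k mpoly"
  assume G: "G \<noteq> 0" "vars G \<subseteq> insert j V"
  interpret T: comm_semiring_hom "t_grade I"
    by (rule comm_semiring_hom_t_grade)
  have const: "t_grade I \<circ> Poly_Mapping.single {#} = (\<lambda>c. [:Poly_Mapping.single {#} c:])"
    by (auto simp: t_grade_const vars_def)
  have "t_grade I (psubst G Z) = hom_eval (\<lambda>c. [:Poly_Mapping.single {#} c:]) (t_grade I \<circ> Z) G"
    by (simp only: T.hom_hom_eval const)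
  also have "\<dots> \<noteq> 0"
  proof (rule hom_eval_const_poly_ne_zero[OF const_mpoly.comm_semiring_hom_axioms _ _ _ G])
    show "psubst G Z \<noteq> 0" if "G \<noteq> 0" "vars G \<subseteq> V" for G
      using indep that by (simp add: alg_indep_def)
    show "(t_grade I \<circ> Z) i = [:Z i:]" if "i \<in> V" for i
      using vars_Z[OF that] by (simp add: t_grade_const)
    show "degree ((t_grade I \<circ> Z) j) \<noteq> 0"
      using assms(3-5) by (simp add: t_grade_degree)
  qed
  finally show "psubst G Z \<noteq> 0"
    by (auto simp: T.hom_0)
qed

section \<open>Free generators\<close>

lemma nc_in_iff_nc_poly: "nc_in {..<n} P \<longleftrightarrow> nc_poly n (Poly_Mapping.lookup P)"
  by (auto simp: nc_in_def nc_poly_def vars_def simp flip: in_keys_iff)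

lemma nc_poly_eq_lookup:
  assumes "nc_poly n P"
  obtains P' where "nc_in {..<n} P'" "Poly_Mapping.lookup P' = P"
proof
  show "Poly_Mapping.lookup (Abs_poly_mapping P) = P"
    using assms by (simp add: nc_poly_def)
  then show "nc_in {..<n} (Abs_poly_mapping P)"
    using assms by (simp add: nc_in_iff_nc_poly)
qed

lemma gen_eq_aeval: "gen sc B = {aeval sc z P | n P z. nc_in {..<n} P \<and> z ` {..<n} \<subseteq> B}"
proof (intro set_eqI iffI)
  fix u
  assume "u \<in> gen sc B"
  then obtain n P z where "nc_poly n P" "z ` {..<n} \<subseteq> B" "u = peval sc P z"
    by (auto simp: gen_def)
  moreover obtain P' where "nc_in {..<n} P'" "Poly_Mapping.lookup P' = P"
    using nc_poly_eq_lookup[OF \<open>nc_poly n P\<close>] .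
  ultimately show "u \<in> {aeval sc z P | n P z. nc_in {..<n} P \<and> z ` {..<n} \<subseteq> B}"
    by (auto simp: aeval_def)
qed (auto simp: gen_def aeval_def nc_in_iff_nc_poly)

lemma SFG_iff_aeval:
  fixes sc :: "'k::field \<Rightarrow> 'a::comm_ring \<Rightarrow> 'a"
  shows "SFG sc R \<longleftrightarrow>
     (\<forall>n P z. nc_in {..<n} P \<and> P \<noteq> 0 \<and> inj_on z {..<n} \<and> z ` {..<n} \<subseteq> R \<longrightarrow> aeval sc z P \<noteq> 0)"
  (is "_ \<longleftrightarrow> ?aeval")
proof
  assume "SFG sc R"
  moreover have "\<exists>M. Poly_Mapping.lookup P M \<noteq> 0" if "P \<noteq> 0" for P :: "'k mpoly"
    using that by (metis lookup_zero poly_mapping_eqI)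
  ultimately show ?aeval
    by (auto simp: SFG_def aeval_def nc_in_iff_nc_poly)
next
  assume aeval: ?aeval
  show "SFG sc R"
    unfolding SFG_def
  proof (intro allI impI)
    fix n and P :: "nat multiset \<Rightarrow> 'k" and z
    assume "nc_poly n P \<and> (\<exists>M. P M \<noteq> 0) \<and> inj_on z {..<n} \<and> z ` {..<n} \<subseteq> R"
    moreover obtain P' where "nc_in {..<n} P'" "Poly_Mapping.lookup P' = P"
      using nc_poly_eq_lookup calculation by blast
    moreover from calculation have "P' \<noteq> 0"
      by auto
    ultimately show "peval sc P z \<noteq> 0"
      using aeval by (auto simp: aeval_def)
  qed
qed

lemma psubst_reindex:
  assumes "bij_betw f {..<n} V" "nc_in V G"
  defines "G' \<equiv> psubst G (\<lambda>k. Var (inv_into {..<n} f k))"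
  shows "nc_in {..<n} G'" "psubst G' (\<lambda>i. Var (f i)) = G"
proof -
  have inv: "inv_into {..<n} f k < n" "f (inv_into {..<n} f k) = k" if "k \<in> V" for k
    using that assms(1) by (auto simp: bij_betw_def inv_into_into f_inv_into_f)
  show "nc_in {..<n} G'"
    unfolding G'_def using assms(2) inv unfolding nc_in_def[of V] by (intro psubst_nc_in) auto
  have "psubst G' (\<lambda>i. Var (f i)) = psubst G (\<lambda>k. Var (f (inv_into {..<n} f k)))"
    by (simp add: G'_def psubst_psubst psubst_of_Var)
  also have "\<dots> = psubst G Var"
    using assms(2) inv by (intro hom_eval_cong) (auto simp: nc_in_def)
  finally show "psubst G' (\<lambda>i. Var (f i)) = G"
    by (simp add: psubst_Var)
qed

context
  fixes sc :: "'k::field \<Rightarrow> 'a::comm_ring \<Rightarrow> 'a"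
  assumes comm_algebra: "comm_algebra sc"
begin

lemma aeval_reindex:
  assumes "bij_betw f {..<n} V" "nc_in V G"
  shows "aeval sc w G = aeval sc (w \<circ> f) (psubst G (\<lambda>k. Var (inv_into {..<n} f k)))"
proof -
  let ?G' = "psubst G (\<lambda>k. Var (inv_into {..<n} f k))"
  have "aeval sc w G = aeval sc w (psubst ?G' (\<lambda>i. Var (f i)))"
    using psubst_reindex(2)[OF assms] by simp
  also have "\<dots> = aeval sc (\<lambda>i. aeval sc w (Var (f i))) ?G'"
    using psubst_reindex(1)[OF assms] by (intro aeval_psubst[OF comm_algebra]) auto
  finally show ?thesis
    by (simp add: aeval_Var[OF comm_algebra] o_def)
qed

lemma aeval_in_gen:
  assumes "finite V" "nc_in V P" "w ` V \<subseteq> B"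
  shows "aeval sc w P \<in> gen sc B"
proof -
  obtain f where f: "bij_betw f {..<card V} V"
    using ex_bij_betw_nat_finite[OF assms(1)] by (auto simp: atLeast0LessThan)
  then have "(w \<circ> f) ` {..<card V} \<subseteq> B"
    using assms(3) by (auto simp: bij_betw_def)
  then show ?thesis
    unfolding gen_eq_aeval aeval_reindex[OF f assms(2)] using psubst_reindex(1)[OF f assms(2)] by blast
qed

lemma SFG_aeval_ne_zero:
  assumes "SFG sc R" "finite V" "nc_in V P" "P \<noteq> 0" "inj_on w V" "w ` V \<subseteq> R"
  shows "aeval sc w P \<noteq> 0"
proof -
  obtain f where f: "bij_betw f {..<card V} V"
    using ex_bij_betw_nat_finite[OF assms(2)] by (auto simp: atLeast0LessThan)
  let ?P' = "psubst P (\<lambda>k. Var (inv_into {..<card V} f k))"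
  have "?P' \<noteq> 0"
    using psubst_reindex(2)[OF f assms(3)] assms(4) by auto
  moreover have "inj_on (w \<circ> f) {..<card V}" "(w \<circ> f) ` {..<card V} \<subseteq> R"
    using f assms(5,6) by (auto simp: bij_betw_def intro: comp_inj_on)
  ultimately show ?thesis
    using assms(1) psubst_reindex(1)[OF f assms(3)]
    unfolding aeval_reindex[OF f assms(3)] SFG_iff_aeval by blast
qed

lemma alg_indep_of_SFG:
  assumes "SFG sc R" "finite V" "inj_on y V" "y ` V \<subseteq> R"
    and "\<And>i. i \<in> V \<Longrightarrow> nc_in UNIV (Z i)" "\<And>i. i \<in> V \<Longrightarrow> y i = aeval sc a (Z i)"
  shows "alg_indep V Z"
  unfolding alg_indep_def
proof (intro allI impI)
  fix G :: "'k mpoly"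
  assume G: "G \<noteq> 0" "vars G \<subseteq> V"
  show "psubst G Z \<noteq> 0"
  proof (cases "{#} \<in> Poly_Mapping.keys G")
    case True
    have "Poly_Mapping.lookup (psubst G Z) {#} = Poly_Mapping.lookup G {#}"
      using G assms(5) by (intro lookup_psubst_empty) auto
    with True show ?thesis
      by (auto simp: in_keys_iff)
  next
    case False
    with G have nc: "nc_in V G"
      by (simp add: nc_in_def)
    then have "aeval sc a (psubst G Z) = aeval sc (\<lambda>i. aeval sc a (Z i)) G"
      using assms(5) by (rule aeval_psubst[OF comm_algebra])
    also have "\<dots> = aeval sc y G"
      using G assms(6) by (intro aeval_cong) auto
    also have "\<dots> \<noteq> 0"
      using assms(1-4) nc G by (intro SFG_aeval_ne_zero) auto
    finally show ?thesis
      by auto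
  qed
qed

lemma var_outside_of_not_in_gen:
  assumes "nc_in {..<m} Z" "aeval sc a Z \<notin> gen sc S"
  obtains M k where "M \<in> Poly_Mapping.keys Z" "k \<in># M" "a k \<notin> S"
proof -
  have "\<not> nc_in {k. k < m \<and> a k \<in> S} Z"
    using aeval_in_gen[of "{k. k < m \<and> a k \<in> S}" Z a S] assms(2) by auto
  with assms(1) show ?thesis
    using that by (fastforce simp: nc_in_def vars_def)
qed

lemma aeval_ne_zero_of_alg_indep:
  assumes "SFG sc A" "inj_on a {..<m}" "a ` {..<m} \<subseteq> A"
    and "alg_indep V Z" "\<And>i. i \<in> V \<Longrightarrow> nc_in {..<m} (Z i)" "nc_in V P" "P \<noteq> 0"
  shows "aeval sc (\<lambda>i. aeval sc a (Z i)) P \<noteq> 0"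
proof -
  have "psubst P Z \<noteq> 0"
    using assms(4,6,7) by (simp add: alg_indep_def nc_in_def)
  moreover have "nc_in {..<m} (psubst P Z)"
    using assms(5,6) by (intro psubst_nc_in) (auto simp: nc_in_def)
  ultimately have "aeval sc a (psubst P Z) \<noteq> 0"
    using assms(1-3) by (auto simp: SFG_iff_aeval)
  also have "aeval sc a (psubst P Z) = aeval sc (\<lambda>i. aeval sc a (Z i)) P"
    using assms(5,6) by (intro aeval_psubst[OF comm_algebra]) (auto intro: nc_in_mono)
  finally show ?thesis .
qed

lemma common_aeval_representation:
  fixes n :: nat
  assumes "\<forall>i<n. y i \<in> gen sc (B i)"
  obtains a m Z where "inj_on a {..<m}" "a ` {..<m} \<subseteq> (\<Union>i<n. B i)"
    "\<And>i. i < n \<Longrightarrow> nc_in {k. k < m \<and> a k \<in> B i} (Z i)"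
    "\<And>i. i < n \<Longrightarrow> y i = aeval sc a (Z i)"
proof -
  have "\<forall>i. \<exists>r. i < n \<longrightarrow> nc_in {..<fst r} (fst (snd r)) \<and> snd (snd r) ` {..<fst r} \<subseteq> B i \<and>
      y i = aeval sc (snd (snd r)) (fst (snd r))"
    using assms by (force simp: gen_eq_aeval)
  then obtain r where r: "\<forall>i. i < n \<longrightarrow> nc_in {..<fst (r i)} (fst (snd (r i))) \<and>
      snd (snd (r i)) ` {..<fst (r i)} \<subseteq> B i \<and> y i = aeval sc (snd (snd (r i))) (fst (snd (r i)))"
    by metis
  define l Q z where "l i = fst (r i)" and "Q i = fst (snd (r i))" and "z i = snd (snd (r i))" for i
  have rep: "nc_in {..<l i} (Q i) \<and> z i ` {..<l i} \<subseteq> B i \<and> y i = aeval sc (z i) (Q i)" if "i < n" for i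
    using r that by (simp add: l_def Q_def z_def)
  define T where "T = (\<Union>i<n. z i ` {..<l i})"
  have "finite T"
    unfolding T_def by (intro finite_UN_I finite_imageI) auto
  then obtain a where a: "bij_betw a {..<card T} T"
    using ex_bij_betw_nat_finite by (auto simp: atLeast0LessThan)
  define g where "g = inv_into {..<card T} a"
  have g: "g s < card T" "a (g s) = s" if "s \<in> T" for s
    using that a inv_into_into[of s a "{..<card T}"] f_inv_into_f[of s a "{..<card T}"]
    by (auto simp: g_def bij_betw_def)
  define Z where "Z i = psubst (Q i) (\<lambda>k. Var (g (z i k)))" for i
  show ?thesis
  proof
    show "inj_on a {..<card T}" "a ` {..<card T} \<subseteq> (\<Union>i<n. B i)"
      using a rep by (auto simp: bij_betw_def T_def)
  next
    fix i
    assume "i < n"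
    then have vars_Q: "z i k \<in> T" "z i k \<in> B i" if "k \<in> vars (Q i)" for k
      using rep[OF \<open>i < n\<close>] that \<open>i < n\<close> unfolding T_def nc_in_def by blast+
    have "{#} \<notin> Poly_Mapping.keys (Q i)"
      using rep[OF \<open>i < n\<close>] by (simp add: nc_in_def)
    then show "nc_in {k. k < card T \<and> a k \<in> B i} (Z i)"
      unfolding Z_def using vars_Q g by (intro psubst_nc_in) auto
    have "aeval sc a (Z i) = aeval sc (\<lambda>k. aeval sc a (Var (g (z i k)))) (Q i)"
      unfolding Z_def using rep[OF \<open>i < n\<close>] by (intro aeval_psubst[OF comm_algebra]) auto
    also have "\<dots> = y i"
      using rep[OF \<open>i < n\<close>] vars_Q g by (auto simp: aeval_Var[OF comm_algebra] intro: aeval_cong)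
    finally show "y i = aeval sc a (Z i)" ..
  qed
qed

lemma aeval_ne_zero_at_element_not_in_gen:
  fixes n :: nat
  assumes SFG_A: "SFG sc A" and gen_A: "gen sc A = UNIV" and "S \<subseteq> A"
    and SFG_R: "SFG sc R" and "R \<subseteq> gen sc S"
    and "j < n" "y j \<notin> gen sc S" "inj_on y {..<n}" "y ` ({..<n} - {j}) \<subseteq> R"
    and P: "nc_in {..<n} P" "P \<noteq> 0"
  shows "aeval sc y P \<noteq> 0"
proof -
  define V where "V = {..<n} - {j}"
  have "\<forall>i<n. y i \<in> gen sc (if i = j then A else S)"
    using assms(5,9) gen_A by (auto simp: V_def)
  then obtain a m and Z :: "nat \<Rightarrow> 'k mpoly" where a: "inj_on a {..<m}" "a ` {..<m} \<subseteq> (\<Union>i<n. if i = j then A else S)"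
    and Z: "\<And>i. i < n \<Longrightarrow> nc_in {k. k < m \<and> a k \<in> (if i = j then A else S)} (Z i)"
      "\<And>i. i < n \<Longrightarrow> y i = aeval sc a (Z i)"
    by (rule common_aeval_representation) (rule that)
  have a_A: "a ` {..<m} \<subseteq> A"
    using a(2) assms(3) by (auto split: if_splits)
  have Z_nc: "nc_in {..<m} (Z i)" if "i < n" for i
    using Z(1)[OF that] by (rule nc_in_mono) auto
  have "alg_indep V Z"
  proof (rule alg_indep_of_SFG[OF SFG_R])
    show "finite V" "inj_on y V" "y ` V \<subseteq> R"
      using assms(8,9) by (auto simp: V_def intro: inj_on_subset)
    show "nc_in UNIV (Z i)" "y i = aeval sc a (Z i)" if "i \<in> V" for i
      using Z_nc Z(2) that by (auto simp: V_def intro: nc_in_mono)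
  qed
  moreover obtain M k where "M \<in> Poly_Mapping.keys (Z j)" "k \<in># M" "a k \<notin> S"
    using Z_nc[OF \<open>j < n\<close>] Z(2)[OF \<open>j < n\<close>] assms(7) by (metis var_outside_of_not_in_gen)
  moreover have "vars (Z i) \<subseteq> {k. a k \<in> S}" if "i \<in> V" for i
    using Z(1)[of i] that by (auto simp: V_def nc_in_def)
  ultimately have "alg_indep (insert j V) Z"
    by (intro alg_indep_insert[where I = "{k. a k \<in> S}"]) auto
  moreover have "insert j V = {..<n}"
    using \<open>j < n\<close> by (auto simp: V_def)
  ultimately have "aeval sc (\<lambda>i. aeval sc a (Z i)) P \<noteq> 0"
    using SFG_A a(1) a_A Z_nc P by (intro aeval_ne_zero_of_alg_indep) auto
  also have "aeval sc (\<lambda>i. aeval sc a (Z i)) P = aeval sc y P"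
    using P(1) Z(2) by (intro aeval_cong) (auto simp: nc_in_def)
  finally show ?thesis .
qed

theorem SFG_insert_not_in_gen:
  assumes "SFG sc A" "gen sc A = UNIV" "S \<subseteq> A" "SFG sc R" "R \<subseteq> gen sc S" "x \<notin> gen sc S"
  shows "SFG sc (insert x R)"
  unfolding SFG_iff_aeval
proof (intro allI impI)
  fix n and P :: "'k mpoly" and y
  assume "nc_in {..<n} P \<and> P \<noteq> 0 \<and> inj_on y {..<n} \<and> y ` {..<n} \<subseteq> insert x R"
  then have P: "nc_in {..<n} P" "P \<noteq> 0" and y: "inj_on y {..<n}" "y ` {..<n} \<subseteq> insert x R"
    by auto
  show "aeval sc y P \<noteq> 0"
  proof (cases "x \<in> y ` {..<n}")
    case True
    then obtain j where "j < n" "y j = x"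
      by auto
    moreover from this y have "y ` ({..<n} - {j}) \<subseteq> R"
      by (auto simp: inj_on_def)
    ultimately show ?thesis
      using assms P y by (intro aeval_ne_zero_at_element_not_in_gen) auto
  next
    case False
    with y(2) have "y ` {..<n} \<subseteq> R"
      by auto
    with assms(4) P y(1) show ?thesis
      unfolding SFG_iff_aeval by blast
  qed
qed

end

theorem lemma4p2:
  shows "(\<forall>(sc :: real \<Rightarrow> 'a::comm_ring \<Rightarrow> 'a) A S R x.
            comm_algebra sc \<and> SFG sc A \<and> gen sc A = UNIV \<and> S \<subseteq> A \<and>
            SFG sc R \<and> R \<subseteq> gen sc S \<and> x \<notin> gen sc S
            \<longrightarrow> SFG sc (insert x R))
       \<and> (\<forall>(sc :: complex \<Rightarrow> 'b::comm_ring \<Rightarrow> 'b) A S R x.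
            comm_algebra sc \<and> SFG sc A \<and> gen sc A = UNIV \<and> S \<subseteq> A \<and>
            SFG sc R \<and> R \<subseteq> gen sc S \<and> x \<notin> gen sc S
            \<longrightarrow> SFG sc (insert x R))"
  by (blast intro: SFG_insert_not_in_gen)

end
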